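(* Let $\mathcal H=(C,f,D,g)$ be a hybrid plant and $\mathcal A\subset\mathbb R^n$ a closed set. Suppose there exist a continuous function $\sigma:(0,\infty)\to[0,\infty)$ and $\varepsilon>0$ such that $|f(x,u)|\le\sigma(|x|_{\mathcal A})$ for all $(x,u)\in C$ with $0<|x|_{\mathcal A}\le\varepsilon$. Then there exists a class-$\mathcal K$ function $\alpha$ such that every solution pair $(x,u)$ to $\mathcal H$ satisfies $|x(t,0)|_{\mathcal A}\ge\alpha(|x(0,0)|_{\mathcal A})$ for all $t\in[0,\alpha(|x(0,0)|_{\mathcal A})]$ with $(t,0)\in\operatorname{dom}(x,u)$.
   Context: Notation: $|\cdot|$ is the Euclidean norm, $|x|_{\mathcal A}=\inf_{a\in\mathcal A}|x-a|$. A class-$\mathcal K$ function is a continuous strictly increasing $\alpha:\mathbb R_{\ge0}\to\mathbb R_{\ge0}$ with $\alpha(0)=0$. A hybrid plant $\mathcal H=(C,f,D,g)$ consists of a closed flow set $C\subset\mathbb R^n\times\mathbb R^m$, a flow map $f:C\to\mathbb R^n$, a jump set $D\subset\mathbb R^n\times\mathbb R^m$ and a jump map $g:D\to\mathbb R^n$, with dynamics $\dot x=f(x,u)$ for $(x,u)\in C$ and $x^+=g(x,u)$ for $(x,u)\in D$. A set $E\subset\mathbb R_{\ge0}\times\mathbb N$ is a compact hybrid time domain if $E=\bigcup_{j=0}^{J}([t_j,t_{j+1}]\times\{j\})$ for some $J\in\mathbb N$ and $0=t_0\le t_1\le\dots\le t_{J+1}$; $E$ is a hybrid time domain if it is the union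 of a nondecreasing sequence of compact hybrid time domains. A pair $(x,u)$ with common hybrid time domain $\operatorname{dom}(x,u)$ is a solution pair to $\mathcal H$ if: (S0) $(x(0,0),u(0,0))\in C\cup D$; (S1) for each $j$ such that $I^j:=\{t:(t,j)\in\operatorname{dom}(x,u)\}$ has nonempty interior, $t\mapsto x(t,j)$ is locally absolutely continuous, $t\mapsto u(t,j)$ is Lebesgue measurable and locally essentially bounded on $\operatorname{int}I^j$, and for almost all $t\in I^j$, $(x(t,j),u(t,j))\in C$ and $\dot x(t,j)=f(x(t,j),u(t,j))$; (S2) for each $(t,j)\in\operatorname{dom}(x,u)$ with $(t,j+1)\in\operatorname{dom}(x,u)$, $(x(t,j),u(t,j))\in D$ and $x(t,j+1)=g(x(t,j),u(t,j))$. *)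

theory Defs
  imports "HOL-Analysis.Analysis"
begin

definition setdist_pt :: "'a::euclidean_space \<Rightarrow> 'a set \<Rightarrow> real" where
  "setdist_pt x A = infdist x A"

definition class_K :: "(real \<Rightarrow> real) \<Rightarrow> bool" where
  "class_K \<alpha> \<longleftrightarrow> continuous_on {0..} \<alpha> \<and> strict_mono_on {0..} \<alpha> \<and> \<alpha> 0 = 0
     \<and> (\<forall>s\<ge>0. \<alpha> s \<ge> 0)"

definition compact_htd :: "(real \<times> nat) set \<Rightarrow> bool" where
  "compact_htd E \<longleftrightarrow> (\<exists>(J::nat) (t::nat \<Rightarrow> real).
      t 0 = 0 \<and> (\<forall>j\<le>J. t j \<le> t (Suc j)) \<and>
      E = (\<Union>j\<in>{0..J}. {t j .. t (Suc j)} \<times> {j}))"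

definition htd :: "(real \<times> nat) set \<Rightarrow> bool" where
  "htd E \<longleftrightarrow> (\<exists>Es :: nat \<Rightarrow> (real \<times> nat) set.
      (\<forall>k. compact_htd (Es k)) \<and> (\<forall>k. Es k \<subseteq> Es (Suc k)) \<and> E = (\<Union>k. Es k))"

definition slice :: "(real \<times> nat) set \<Rightarrow> nat \<Rightarrow> real set" where
  "slice E j = {t. (t, j) \<in> E}"

definition abs_cont_on :: "real set \<Rightarrow> (real \<Rightarrow> 'a::real_normed_vector) \<Rightarrow> bool" where
  "abs_cont_on S h \<longleftrightarrow> (\<forall>\<epsilon>>0. \<exists>\<delta>>0. \<forall>(n::nat) (a::nat \<Rightarrow> real) (b::nat \<Rightarrow> real).
      (\<forall>k<n. a k \<le> b k \<and> {a k .. b k} \<subseteq> S) \<and>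
      (\<forall>k<n. \<forall>l<n. k \<noteq> l \<longrightarrow> b k \<le> a l \<or> b l \<le> a k) \<and>
      (\<Sum>k<n. b k - a k) < \<delta> \<longrightarrow> (\<Sum>k<n. norm (h (b k) - h (a k))) < \<epsilon>)"

definition loc_abs_cont_on :: "real set \<Rightarrow> (real \<Rightarrow> 'a::real_normed_vector) \<Rightarrow> bool" where
  "loc_abs_cont_on I h \<longleftrightarrow> (\<forall>a b. {a..b} \<subseteq> I \<longrightarrow> abs_cont_on {a..b} h)"

definition loc_ess_bounded_on :: "real set \<Rightarrow> (real \<Rightarrow> 'a::real_normed_vector) \<Rightarrow> bool" where
  "loc_ess_bounded_on U h \<longleftrightarrow> (\<forall>K. compact K \<and> K \<subseteq> U \<longrightarrow>
      (\<exists>B. AE t in lebesgue. t \<in> K \<longrightarrow> norm (h t) \<le> B))"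

text \<open>Solution pair (x,u) with common hybrid time domain E to the hybrid plant (C,f,D,g).
  Functions are total in HOL; only values on E matter.\<close>
definition solution_pair ::
  "('x::euclidean_space \<times> 'u::euclidean_space) set \<Rightarrow> ('x \<Rightarrow> 'u \<Rightarrow> 'x) \<Rightarrow> ('x \<times> 'u) set \<Rightarrow> ('x \<Rightarrow> 'u \<Rightarrow> 'x)
    \<Rightarrow> (real \<times> nat) set \<Rightarrow> (real \<Rightarrow> nat \<Rightarrow> 'x) \<Rightarrow> (real \<Rightarrow> nat \<Rightarrow> 'u) \<Rightarrow> bool" where
  "solution_pair C f D g E x u \<longleftrightarrow>
     htd E \<and>
     (x 0 0, u 0 0) \<in> C \<union> D \<and>
     (\<forall>j. interior (slice E j) \<noteq> {} \<longrightarrow>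
        loc_abs_cont_on (slice E j) (\<lambda>t. x t j) \<and>
        (\<lambda>t. u t j) \<in> borel_measurable (lebesgue_on (interior (slice E j))) \<and>
        loc_ess_bounded_on (interior (slice E j)) (\<lambda>t. u t j) \<and>
        (AE t in lebesgue. t \<in> slice E j \<longrightarrow>
            (x t j, u t j) \<in> C \<and>
            ((\<lambda>s. x s j) has_vector_derivative f (x t j) (u t j)) (at t within slice E j))) \<and>
     (\<forall>t j. (t, j) \<in> E \<and> (t, Suc j) \<in> E \<longrightarrow>
        (x t j, u t j) \<in> D \<and> x t (Suc j) = g (x t j) (u t j))"

end

(*
  Let r = |x(0,0)|_A > 0 and rho = min r eps.  While x(.,0) stays in the band
  rho/2 < |x|_A < rho, its speed |f| is at most sigma(|x|_A), and alpha(r) is chosen so small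
  that alpha(r) sigma(s) <= rho/4 on the band.  Hence, before time alpha(r), the state cannot
  cross the band from distance rho down to distance rho/2 >= alpha(r).  The function alpha is the
  running minimum of s / (4 (1 + sigma s)), made strictly increasing by the factor r / (1 + r).

  Since x(.,0) is only absolutely continuous, the speed bound holds only almost everywhere.
  The exceptional null set is covered by an open set T of small measure, on which absolute
  continuity makes the total variation small; a real induction integrates the speed bound off T.
*)

theory Submission
  imports Defs
begin

definition nonoverlapping_intervals ::
    "nat \<Rightarrow> (nat \<Rightarrow> real) \<Rightarrow> (nat \<Rightarrow> real) \<Rightarrow> real set \<Rightarrow> bool" where
  "nonoverlapping_intervals n l r S \<longleftrightarrow>
     (\<forall>k<n. l k \<le> r k \<and> {l k..r k} \<subseteq> S) \<and> (\<forall>k<n. \<forall>j<n. k \<noteq> j \<longrightarrow> r k \<le> l j \<or> r j \<le> l k)"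

lemma abs_cont_on_iff:
  "abs_cont_on S h \<longleftrightarrow> (\<forall>\<epsilon>>0. \<exists>\<delta>>0. \<forall>n l r. nonoverlapping_intervals n l r S \<and>
     (\<Sum>k<n. r k - l k) < \<delta> \<longrightarrow> (\<Sum>k<n. norm (h (r k) - h (l k))) < \<epsilon>)"
  unfolding abs_cont_on_def nonoverlapping_intervals_def by (simp only: conj_assoc)

lemma nonoverlapping_intervals_mono:
  "nonoverlapping_intervals n l r S \<Longrightarrow> S \<subseteq> S' \<Longrightarrow> nonoverlapping_intervals n l r S'"
  unfolding nonoverlapping_intervals_def by blast

lemma abs_cont_on_subset:
  assumes "abs_cont_on S h" and "T \<subseteq> S"
  shows "abs_cont_on T h"
  unfolding abs_cont_on_iff
proof (intro allI impI)
  fix \<epsilon> :: real assume "\<epsilon> > 0"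
  then obtain \<delta> where "\<delta> > 0" and "\<forall>n l r. nonoverlapping_intervals n l r S \<and>
      (\<Sum>k<n. r k - l k) < \<delta> \<longrightarrow> (\<Sum>k<n. norm (h (r k) - h (l k))) < \<epsilon>"
    using assms(1) unfolding abs_cont_on_iff by blast
  then show "\<exists>\<delta>>0. \<forall>n l r. nonoverlapping_intervals n l r T \<and>
      (\<Sum>k<n. r k - l k) < \<delta> \<longrightarrow> (\<Sum>k<n. norm (h (r k) - h (l k))) < \<epsilon>"
    using nonoverlapping_intervals_mono[OF _ assms(2)] by blast
qed

lemma nonoverlapping_intervals_snoc:
  assumes "nonoverlapping_intervals n l r S" and "S \<subseteq> {..u}" and "u \<le> v"
  shows "nonoverlapping_intervals (Suc n) (l(n := u)) (r(n := v)) (S \<union> {u..v})"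
proof -
  have "r k \<le> u" if "k < n" for k
    using assms that by (force simp: nonoverlapping_intervals_def)
  then show ?thesis
    using assms(1,3) unfolding nonoverlapping_intervals_def
    by (auto simp: less_Suc_eq)
qed

lemma sum_lengths_le_measure:
  assumes "nonoverlapping_intervals n l r S" and "S \<in> lmeasurable"
  shows "(\<Sum>k<n. r k - l k) \<le> measure lebesgue S"
proof -
  have "(\<Sum>k<n. r k - l k) = (\<Sum>k<n. measure lebesgue {l k..r k})"
    using assms(1) by (intro sum.cong) (auto simp: nonoverlapping_intervals_def)
  also have "\<dots> = measure lebesgue (\<Union>k<n. {l k..r k})"
  proof (rule measure_negligible_finite_Union_image[symmetric])
    show "pairwise (\<lambda>k j. negligible ({l k..r k} \<inter> {l j..r j})) {..<n}"
    proof (rule pairwiseI)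
      fix k j assume "k \<in> {..<n}" "j \<in> {..<n}" "k \<noteq> j"
      then have "{l k..r k} \<inter> {l j..r j} \<subseteq> {r k} \<or> {l k..r k} \<inter> {l j..r j} \<subseteq> {r j}"
        using assms(1) unfolding nonoverlapping_intervals_def by fastforce
      then show "negligible ({l k..r k} \<inter> {l j..r j})"
        using negligible_subset negligible_sing by metis
    qed
  qed auto
  also have "\<dots> \<le> measure lebesgue S"
    using assms by (intro measure_mono_fmeasurable) (auto simp: nonoverlapping_intervals_def)
  finally show ?thesis .
qed

lemma abs_cont_on_imp_continuous_on:
  fixes h :: "real \<Rightarrow> 'a::real_normed_vector"
  assumes "abs_cont_on {a..b} h"
  shows "continuous_on {a..b} h"
  unfolding continuous_on_iff
proof (intro ballI allI impI)
  fix s \<epsilon> :: real assume s: "s \<in> {a..b}" and "0 < \<epsilon>"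
  then obtain \<delta> where "\<delta> > 0" and \<delta>: "\<And>n l r. nonoverlapping_intervals n l r {a..b} \<Longrightarrow>
      (\<Sum>k<n. r k - l k) < \<delta> \<Longrightarrow> (\<Sum>k<n. norm (h (r k) - h (l k))) < \<epsilon>"
    using assms unfolding abs_cont_on_iff by metis
  have "dist (h y) (h s) < \<epsilon>" if y: "y \<in> {a..b}" "dist y s < \<delta>" for y
  proof -
    have "nonoverlapping_intervals 1 (\<lambda>_. min s y) (\<lambda>_. max s y) {a..b}"
      using s y by (auto simp: nonoverlapping_intervals_def)
    then show ?thesis
      using \<delta>[of 1 "\<lambda>_. min s y" "\<lambda>_. max s y"] y
      by (auto simp: dist_norm norm_minus_commute min_def max_def abs_real_def split: if_splits)
  qed
  then show "\<exists>\<delta>>0. \<forall>y\<in>{a..b}. dist y s < \<delta> \<longrightarrow> dist (h y) (h s) < \<epsilon>"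
    using \<open>\<delta> > 0\<close> by blast
qed

lemma null_sets_lebesgue_open_cover:
  assumes "N \<in> null_sets lebesgue" and "\<delta> > 0"
  obtains T where "open T" "N \<subseteq> T" "T \<in> lmeasurable" "measure lebesgue T < \<delta>"
proof -
  obtain T where T: "open T" "N \<subseteq> T" "T - N \<in> lmeasurable" "emeasure lebesgue (T - N) < ennreal \<delta>"
    using sets_lebesgue_outer_open[of N \<delta>] assms by auto
  have T_split: "T = (T - N) \<union> N"
    using T(2) by blast
  have "T \<in> sets lebesgue"
    using T(3) assms(1) T_split by (metis fmeasurableD null_setsD2 sets.Un)
  have "emeasure lebesgue T = emeasure lebesgue (T - N)"
    using T(3) assms(1) T_split by (metis emeasure_Un_null_set fmeasurableD)
  then have "T \<in> lmeasurable" and "emeasure lebesgue T = ennreal (measure lebesgue (T - N))"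
    using \<open>T \<in> sets lebesgue\<close> T(3) by (auto intro: fmeasurableI simp: emeasure_eq_measure2)
  with T show thesis
    by (intro that[of T]) (auto simp: emeasure_eq_measure2 ennreal_less_iff)
qed

lemma real_interval_induct:
  fixes a b :: real
  assumes "a \<le> b" and "P a"
    and step: "\<And>s. a \<le> s \<Longrightarrow> s < b \<Longrightarrow> P s \<Longrightarrow> \<exists>d>0. \<forall>y. s < y \<and> y < s + d \<and> y \<le> b \<longrightarrow> P y"
    and limit: "\<And>s. a < s \<Longrightarrow> s \<le> b \<Longrightarrow> (\<forall>y\<in>{a..<s}. P y) \<Longrightarrow> P s"
  shows "P b"
proof -
  define S where "S = {s \<in> {a..b}. \<forall>y\<in>{a..s}. P y}"
  define c where "c = Sup S"
  have "a \<in> S" using assms(1,2) by (auto simp: S_def)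
  have bdd: "bdd_above S" unfolding S_def by (rule bdd_aboveI[of _ b]) auto
  have "a \<le> c" unfolding c_def using \<open>a \<in> S\<close> bdd by (rule cSup_upper)
  have "c \<le> b" unfolding c_def using \<open>a \<in> S\<close> by (intro cSup_least) (auto simp: S_def)
  have below: "\<forall>y\<in>{a..<c}. P y"
  proof
    fix y assume y: "y \<in> {a..<c}"
    then obtain s where "s \<in> S" "y < s" using \<open>a \<in> S\<close> less_cSupE unfolding c_def by auto
    then show "P y" using y by (auto simp: S_def)
  qed
  have "P c"
    using limit[of c] \<open>a \<le> c\<close> \<open>c \<le> b\<close> below \<open>P a\<close> by (cases "c = a") auto
  with below have upto_c: "\<forall>y\<in>{a..c}. P y" by (auto simp: less_le)
  have "c = b"
  proof (rule ccontr)
    assume "c \<noteq> b"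
    with \<open>c \<le> b\<close> have "c < b" by simp
    then obtain d where "d > 0" and d: "\<forall>y. c < y \<and> y < c + d \<and> y \<le> b \<longrightarrow> P y"
      using step \<open>a \<le> c\<close> \<open>P c\<close> by blast
    define e where "e = min (d / 2) (b - c)"
    have e: "e > 0" "e < d" "c + e \<le> b" using \<open>d > 0\<close> \<open>c < b\<close> by (auto simp: e_def)
    have "c + e \<in> S" unfolding S_def using upto_c d e \<open>a \<le> c\<close> by (auto simp: not_le)
    then have "c + e \<le> c" unfolding c_def using bdd by (rule cSup_upper)
    then show False using e by simp
  qed
  then show ?thesis using \<open>P c\<close> by simp
qed

definition slow_off :: "real \<Rightarrow> real set \<Rightarrow> (real \<Rightarrow> 'a::real_normed_vector) \<Rightarrow> real \<Rightarrow> real \<Rightarrow> bool" where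
  "slow_off L T h u v \<longleftrightarrow> (\<exists>n l r. nonoverlapping_intervals n l r ({u..v} \<inter> T) \<and>
     norm (h v - h u) \<le> L * (v - u) + (\<Sum>k<n. norm (h (r k) - h (l k))))"

lemma slow_off_refl: "slow_off L T h u u"
  unfolding slow_off_def by (rule exI[of _ 0]) (simp add: nonoverlapping_intervals_def)

lemma slow_off_extend:
  assumes "slow_off L T h a u" and "0 \<le> L" and "a \<le> u" and "u \<le> v"
    and "{u..v} \<subseteq> T \<or> norm (h v - h u) \<le> L * (v - u)"
  shows "slow_off L T h a v"
proof -
  obtain n l r where lr: "nonoverlapping_intervals n l r ({a..u} \<inter> T)"
    and bound: "norm (h u - h a) \<le> L * (u - a) + (\<Sum>k<n. norm (h (r k) - h (l k)))"
    using assms(1) unfolding slow_off_def by blast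
  have norm_split: "norm (h v - h a) \<le> norm (h u - h a) + norm (h v - h u)"
    using norm_triangle_ineq[of "h u - h a" "h v - h u"] by simp
  have sub: "{a..u} \<inter> T \<subseteq> {a..v} \<inter> T"
    using assms(4) by auto
  show ?thesis
    using assms(5)
  proof
    assume "{u..v} \<subseteq> T"
    have lr': "nonoverlapping_intervals (Suc n) (l(n := u)) (r(n := v)) ({a..v} \<inter> T)"
      by (rule nonoverlapping_intervals_mono[OF nonoverlapping_intervals_snoc[OF lr _ assms(4)]])
        (use \<open>{u..v} \<subseteq> T\<close> assms(3,4) in auto)
    have "(\<Sum>k<n. norm (h ((r(n := v)) k) - h ((l(n := u)) k))) = (\<Sum>k<n. norm (h (r k) - h (l k)))"
      by (rule sum.cong) auto
    then have "(\<Sum>k<Suc n. norm (h ((r(n := v)) k) - h ((l(n := u)) k))) =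
        (\<Sum>k<n. norm (h (r k) - h (l k))) + norm (h v - h u)"
      by simp
    moreover have "L * (u - a) \<le> L * (v - a)"
      using assms(2,4) by (intro mult_left_mono) auto
    ultimately have "norm (h v - h a) \<le>
        L * (v - a) + (\<Sum>k<Suc n. norm (h ((r(n := v)) k) - h ((l(n := u)) k)))"
      using bound norm_split by linarith
    with lr' show ?thesis
      unfolding slow_off_def by blast
  next
    assume "norm (h v - h u) \<le> L * (v - u)"
    moreover have "L * (u - a) + L * (v - u) = L * (v - a)"
      by (simp add: algebra_simps)
    ultimately have "norm (h v - h a) \<le> L * (v - a) + (\<Sum>k<n. norm (h (r k) - h (l k)))"
      using bound norm_split by linarith
    with nonoverlapping_intervals_mono[OF lr sub] show ?thesis
      unfolding slow_off_def by blast
  qed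
qed

(* Only intervals straddling s: differentiability at the single point s controls h v - h u
   for u <= s <= v, but not for u, v on the same side of s. *)
definition slow_off_near ::
    "real \<Rightarrow> real set \<Rightarrow> (real \<Rightarrow> 'a::real_normed_vector) \<Rightarrow> real set \<Rightarrow> real \<Rightarrow> bool" where
  "slow_off_near L T h S s \<longleftrightarrow> (\<exists>d>0. \<forall>u v. u \<in> S \<longrightarrow> v \<in> S \<longrightarrow> u \<le> s \<longrightarrow> s \<le> v \<longrightarrow> v - u < d \<longrightarrow>
     {u..v} \<subseteq> T \<or> norm (h v - h u) \<le> L * (v - u))"

lemma slow_off_near_if_mem_open:
  assumes "open T" and "s \<in> T"
  shows "slow_off_near L T h S s"
proof -
  obtain d where "d > 0" "ball s d \<subseteq> T"
    using assms open_contains_ball by blast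
  then show ?thesis
    unfolding slow_off_near_def by (intro exI[of _ d]) (auto simp: dist_real_def subset_eq)
qed

lemma slow_off_near_if_has_vector_derivative:
  fixes h :: "real \<Rightarrow> 'a::real_normed_vector"
  assumes "(h has_vector_derivative w) (at s within S)" and "norm w < L"
  shows "slow_off_near L T h S s"
proof -
  have "\<forall>e>0. \<exists>d>0. \<forall>y\<in>S. norm (y - s) < d \<longrightarrow> norm (h y - h s - (y - s) *\<^sub>R w) \<le> e * norm (y - s)"
    using assms(1) unfolding has_vector_derivative_def has_derivative_within_alt by simp
  moreover have "L - norm w > 0"
    using assms(2) by simp
  ultimately obtain d where "d > 0" and d: "\<And>y. y \<in> S \<Longrightarrow> \<bar>y - s\<bar> < d \<Longrightarrow>
      norm (h y - h s - (y - s) *\<^sub>R w) \<le> (L - norm w) * \<bar>y - s\<bar>"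
    unfolding real_norm_def by blast
  have one_sided: "norm (h y - h s) \<le> L * \<bar>y - s\<bar>" if "y \<in> S" "\<bar>y - s\<bar> < d" for y
  proof -
    have "norm (h y - h s) \<le> norm (h y - h s - (y - s) *\<^sub>R w) + norm ((y - s) *\<^sub>R w)"
      using norm_triangle_ineq[of "h y - h s - (y - s) *\<^sub>R w" "(y - s) *\<^sub>R w"] by simp
    also have "\<dots> \<le> (L - norm w) * \<bar>y - s\<bar> + \<bar>y - s\<bar> * norm w"
      using d that by simp
    finally show ?thesis by (simp add: algebra_simps)
  qed
  have "norm (h v - h u) \<le> L * (v - u)"
    if "u \<in> S" "v \<in> S" "u \<le> s" "s \<le> v" "v - u < d" for u v
  proof -
    have "norm (h v - h u) \<le> norm (h v - h s) + norm (h s - h u)"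
      using norm_triangle_ineq[of "h v - h s" "h s - h u"] by simp
    also have "\<dots> \<le> L * (v - s) + L * (s - u)"
      using one_sided[of v] one_sided[of u] that by (simp add: norm_minus_commute)
    finally show ?thesis by (simp add: algebra_simps)
  qed
  with \<open>d > 0\<close> show ?thesis
    unfolding slow_off_near_def by blast
qed

lemma slow_off_if_slow_off_near:
  assumes "a \<le> b" and "0 \<le> L" and near: "\<And>s. s \<in> {a..b} \<Longrightarrow> slow_off_near L T h {a..b} s"
  shows "slow_off L T h a b"
proof (rule real_interval_induct[OF assms(1)])
  show "slow_off L T h a a" by (rule slow_off_refl)
next
  fix s assume s: "a \<le> s" "s < b" "slow_off L T h a s"
  then obtain d where "d > 0" and d: "\<forall>u v. u \<in> {a..b} \<longrightarrow> v \<in> {a..b} \<longrightarrow> u \<le> s \<longrightarrow> s \<le> v \<longrightarrow>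
      v - u < d \<longrightarrow> {u..v} \<subseteq> T \<or> norm (h v - h u) \<le> L * (v - u)"
    using near[of s] unfolding slow_off_near_def by auto
  have "slow_off L T h a y" if "s < y" "y < s + d" "y \<le> b" for y
  proof (rule slow_off_extend[OF s(3) assms(2) s(1)])
    show "s \<le> y" using that by simp
    show "{s..y} \<subseteq> T \<or> norm (h y - h s) \<le> L * (y - s)"
      using d[rule_format, of s y] that s by simp
  qed
  with \<open>d > 0\<close> show "\<exists>d>0. \<forall>y. s < y \<and> y < s + d \<and> y \<le> b \<longrightarrow> slow_off L T h a y"
    by blast
next
  fix s assume s: "a < s" "s \<le> b" "\<forall>y\<in>{a..<s}. slow_off L T h a y"
  then obtain d where "d > 0" and d: "\<forall>u v. u \<in> {a..b} \<longrightarrow> v \<in> {a..b} \<longrightarrow> u \<le> s \<longrightarrow> s \<le> v \<longrightarrow>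
      v - u < d \<longrightarrow> {u..v} \<subseteq> T \<or> norm (h v - h u) \<le> L * (v - u)"
    using near[of s] unfolding slow_off_near_def by auto
  define y where "y = max a (s - d / 2)"
  have y: "a \<le> y" "y < s" "s - y < d"
    using s \<open>d > 0\<close> by (auto simp: y_def)
  show "slow_off L T h a s"
  proof (rule slow_off_extend[OF _ assms(2) y(1)])
    show "slow_off L T h a y" "y \<le> s"
      using s(3) y by auto
    show "{y..s} \<subseteq> T \<or> norm (h s - h y) \<le> L * (s - y)"
      using d[rule_format, of y s] y s by simp
  qed
qed

lemma abs_cont_on_norm_diff_le_approx:
  fixes h :: "real \<Rightarrow> 'a::real_normed_vector"
  assumes "a \<le> b" and "abs_cont_on {a..b} h" and "N \<in> null_sets lebesgue" and "0 \<le> c" and "\<eta> > 0"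
    and deriv: "\<And>s. s \<in> {a..b} \<Longrightarrow> s \<notin> N \<Longrightarrow>
       \<exists>v. (h has_vector_derivative v) (at s within {a..b}) \<and> norm v \<le> c"
  shows "norm (h b - h a) \<le> (c + \<eta>) * (b - a) + \<eta>"
proof -
  obtain \<delta> where "\<delta> > 0" and \<delta>: "\<And>n l r. nonoverlapping_intervals n l r {a..b} \<Longrightarrow>
      (\<Sum>k<n. r k - l k) < \<delta> \<Longrightarrow> (\<Sum>k<n. norm (h (r k) - h (l k))) < \<eta>"
    using assms(2,5) unfolding abs_cont_on_iff by metis
  obtain T where "open T" "N \<subseteq> T" "T \<in> lmeasurable" "measure lebesgue T < \<delta>"
    using null_sets_lebesgue_open_cover[OF assms(3) \<open>\<delta> > 0\<close>] .
  have "slow_off_near (c + \<eta>) T h {a..b} s" if "s \<in> {a..b}" for s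
  proof (cases "s \<in> N")
    case True
    with \<open>open T\<close> \<open>N \<subseteq> T\<close> show ?thesis
      by (intro slow_off_near_if_mem_open) auto
  next
    case False
    with deriv that obtain v where "(h has_vector_derivative v) (at s within {a..b})" "norm v \<le> c"
      by blast
    with \<open>\<eta> > 0\<close> show ?thesis
      by (intro slow_off_near_if_has_vector_derivative) auto
  qed
  then have "slow_off (c + \<eta>) T h a b"
    using assms(1,4,5) by (intro slow_off_if_slow_off_near) auto
  then obtain n l r where lr: "nonoverlapping_intervals n l r ({a..b} \<inter> T)"
    and bound: "norm (h b - h a) \<le> (c + \<eta>) * (b - a) + (\<Sum>k<n. norm (h (r k) - h (l k)))"
    unfolding slow_off_def by blast
  have "(\<Sum>k<n. r k - l k) \<le> measure lebesgue T"
    using nonoverlapping_intervals_mono[OF lr] \<open>T \<in> lmeasurable\<close>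
    by (intro sum_lengths_le_measure) auto
  then have "(\<Sum>k<n. norm (h (r k) - h (l k))) < \<eta>"
    using nonoverlapping_intervals_mono[OF lr] \<open>measure lebesgue T < \<delta>\<close> by (intro \<delta>) auto
  with bound show ?thesis by simp
qed

lemma abs_cont_on_norm_diff_le:
  fixes h :: "real \<Rightarrow> 'a::real_normed_vector"
  assumes "a \<le> b" and "abs_cont_on {a..b} h" and "N \<in> null_sets lebesgue" and "0 \<le> c"
    and "\<And>s. s \<in> {a..b} \<Longrightarrow> s \<notin> N \<Longrightarrow>
       \<exists>v. (h has_vector_derivative v) (at s within {a..b}) \<and> norm v \<le> c"
  shows "norm (h b - h a) \<le> c * (b - a)"
proof (rule field_le_epsilon)
  fix e :: real assume "e > 0"
  define \<eta> where "\<eta> = e / (b - a + 1)"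
  have "\<eta> > 0" using \<open>e > 0\<close> assms(1) by (simp add: \<eta>_def)
  then have "norm (h b - h a) \<le> (c + \<eta>) * (b - a) + \<eta>"
    using assms by (intro abs_cont_on_norm_diff_le_approx) auto
  also have "\<dots> = c * (b - a) + \<eta> * (b - a + 1)"
    by (simp add: algebra_simps)
  also have "\<eta> * (b - a + 1) = e"
    using assms(1) by (simp add: \<eta>_def)
  finally show "norm (h b - h a) \<le> c * (b - a) + e" .
qed

lemma compact_atLeastAtMost_vimage:
  fixes \<phi> :: "real \<Rightarrow> 'a::topological_space"
  assumes "continuous_on {a..b} \<phi>" and "closed T"
  shows "compact ({a..b} \<inter> \<phi> -` T)"
  using continuous_closed_preimage[OF assms(1) closed_atLeastAtMost assms(2)]
  by (simp add: compact_eq_bounded_closed bounded_Int)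

lemma infdist_stays_above_half:
  fixes x :: "real \<Rightarrow> 'a::metric_space"
  assumes "a \<le> b" and "continuous_on {a..b} x" and "\<rho> \<le> infdist (x a) A"
    and crossing: "\<And>u v. a \<le> u \<Longrightarrow> u < v \<Longrightarrow> v \<le> b \<Longrightarrow>
       (\<forall>s\<in>{u<..<v}. \<rho> / 2 < infdist (x s) A \<and> infdist (x s) A < \<rho>) \<Longrightarrow> dist (x u) (x v) < \<rho> / 2"
  shows "\<rho> / 2 \<le> infdist (x b) A"
proof (rule ccontr)
  define \<phi> where "\<phi> s = infdist (x s) A" for s
  assume "\<not> \<rho> / 2 \<le> infdist (x b) A"
  then have "\<phi> b < \<rho> / 2" by (simp add: \<phi>_def)
  have cont: "continuous_on {a..b} \<phi>"
    unfolding \<phi>_def by (intro continuous_on_infdist assms(2))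
  have "compact ({a..b} \<inter> \<phi> -` {..\<rho> / 2})"
    by (rule compact_atLeastAtMost_vimage[OF cont]) simp
  moreover have "b \<in> {a..b} \<inter> \<phi> -` {..\<rho> / 2}"
    using assms(1) \<open>\<phi> b < \<rho> / 2\<close> by auto
  ultimately obtain v where v: "v \<in> {a..b}" "\<phi> v \<le> \<rho> / 2"
    and v_first: "\<And>s. s \<in> {a..b} \<Longrightarrow> \<phi> s \<le> \<rho> / 2 \<Longrightarrow> v \<le> s"
    using compact_attains_inf[of "{a..b} \<inter> \<phi> -` {..\<rho> / 2}"] by blast
  have "compact ({a..v} \<inter> \<phi> -` {\<rho>..})"
    using cont v by (intro compact_atLeastAtMost_vimage continuous_on_subset[OF cont]) auto
  moreover have "a \<in> {a..v} \<inter> \<phi> -` {\<rho>..}"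
    using v assms(3) by (auto simp: \<phi>_def)
  ultimately obtain u where u: "u \<in> {a..v}" "\<rho> \<le> \<phi> u"
    and u_last: "\<And>s. s \<in> {a..v} \<Longrightarrow> \<rho> \<le> \<phi> s \<Longrightarrow> s \<le> u"
    using compact_attains_sup[of "{a..v} \<inter> \<phi> -` {\<rho>..}"] by blast
  have "u < v"
    using u v \<open>\<phi> b < \<rho> / 2\<close> infdist_nonneg[of "x b" A] by (auto simp: \<phi>_def less_le)
  have "\<forall>s\<in>{u<..<v}. \<rho> / 2 < \<phi> s \<and> \<phi> s < \<rho>"
  proof
    fix s assume s: "s \<in> {u<..<v}"
    then have "s \<in> {a..b}" "s \<in> {a..v}"
      using u v by auto
    then show "\<rho> / 2 < \<phi> s \<and> \<phi> s < \<rho>"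
      using s v_first[of s] u_last[of s] by force
  qed
  then have "dist (x u) (x v) < \<rho> / 2"
    using crossing[of u v] u v \<open>u < v\<close> by (simp add: \<phi>_def)
  moreover have "\<phi> u \<le> \<phi> v + dist (x u) (x v)"
    unfolding \<phi>_def by (rule infdist_triangle)
  ultimately show False
    using u v by simp
qed

lemma infdist_ge_half_if_slow_in_band:
  fixes y :: "real \<Rightarrow> 'a::real_normed_vector"
  assumes "a \<le> b" and "abs_cont_on {a..b} y" and "N \<in> null_sets lebesgue" and "\<rho> \<le> infdist (y a) A"
    and "0 \<le> c" and "c * (b - a) < \<rho> / 2"
    and speed: "\<And>s. s \<in> {a..b} \<Longrightarrow> s \<notin> N \<Longrightarrow> \<rho> / 2 < infdist (y s) A \<Longrightarrow> infdist (y s) A < \<rho> \<Longrightarrow>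
       \<exists>v. (y has_vector_derivative v) (at s within {a..b}) \<and> norm v \<le> c"
  shows "\<rho> / 2 \<le> infdist (y b) A"
proof (rule infdist_stays_above_half[OF assms(1) abs_cont_on_imp_continuous_on[OF assms(2)] assms(4)])
  fix u v assume uv: "a \<le> u" "u < v" "v \<le> b"
    and band: "\<forall>s\<in>{u<..<v}. \<rho> / 2 < infdist (y s) A \<and> infdist (y s) A < \<rho>"
  have "norm (y v - y u) \<le> c * (v - u)"
  proof (rule abs_cont_on_norm_diff_le[where N = "N \<union> {u, v}"])
    show "abs_cont_on {u..v} y"
      using uv by (intro abs_cont_on_subset[OF assms(2)]) auto
    show "N \<union> {u, v} \<in> null_sets lebesgue"
      using assms(3) by auto
    fix s assume s: "s \<in> {u..v}" "s \<notin> N \<union> {u, v}"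
    then obtain w where "(y has_vector_derivative w) (at s within {a..b})" "norm w \<le> c"
      using speed[of s] band uv by fastforce
    then show "\<exists>w. (y has_vector_derivative w) (at s within {u..v}) \<and> norm w \<le> c"
      using uv by (metis atLeastatMost_subset_iff has_vector_derivative_within_subset)
  qed (use uv assms(5) in auto)
  also have "\<dots> \<le> c * (b - a)"
    using uv assms(5) by (intro mult_left_mono) auto
  finally show "dist (y u) (y v) < \<rho> / 2"
    using assms(6) by (simp add: dist_norm norm_minus_commute)
qed

lemma Inf_image_atLeastAtMost_ge:
  fixes q :: "real \<Rightarrow> real"
  assumes "y \<le> y'" and "y' \<le> b" and "0 \<le> e" and bdd: "bdd_below (q ` {y..b})"
    and near: "\<And>s. y \<le> s \<Longrightarrow> s < y' \<Longrightarrow> q y' - e \<le> q s"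
  shows "Inf (q ` {y'..b}) - e \<le> Inf (q ` {y..b})"
proof (rule cInf_greatest)
  show "q ` {y..b} \<noteq> {}"
    using assms(1,2) by auto
  have bdd': "bdd_below (q ` {y'..b})"
    by (rule bdd_below_mono[OF bdd]) (use assms(1) in auto)
  fix z assume "z \<in> q ` {y..b}"
  then obtain s where s: "y \<le> s" "s \<le> b" "z = q s"
    by auto
  show "Inf (q ` {y'..b}) - e \<le> z"
  proof (cases "y' \<le> s")
    case True
    then have "Inf (q ` {y'..b}) \<le> q s"
      using s bdd' by (intro cInf_lower) auto
    with s \<open>0 \<le> e\<close> show ?thesis by simp
  next
    case False
    have "Inf (q ` {y'..b}) \<le> q y'"
      using assms(2) bdd' by (intro cInf_lower) auto
    with near[of s] s False show ?thesis by simp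
  qed
qed

lemma continuous_on_Inf_image_atLeastAtMost:
  fixes q :: "real \<Rightarrow> real"
  assumes "continuous_on {a..b} q"
  shows "continuous_on {a..b} (\<lambda>y. Inf (q ` {y..b}))"
proof (rule uniformly_continuous_imp_continuous, unfold uniformly_continuous_on_def, intro allI impI)
  define L where "L y = Inf (q ` {y..b})" for y
  fix e :: real assume "e > 0"
  have "bdd_below (q ` {a..b})"
    using compact_continuous_image[OF assms compact_Icc]
    by (simp add: bounded_imp_bdd_below compact_imp_bounded)
  then have bdd: "bdd_below (q ` {y..b})" if "a \<le> y" for y
    by (rule bdd_below_mono) (use that in auto)
  obtain d where "d > 0" and d: "\<And>s s'. s \<in> {a..b} \<Longrightarrow> s' \<in> {a..b} \<Longrightarrow> dist s' s < d \<Longrightarrow>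
      dist (q s') (q s) < e / 2"
    using compact_uniformly_continuous[OF assms compact_Icc] \<open>e > 0\<close>
    unfolding uniformly_continuous_on_def by (meson half_gt_zero)
  have near: "\<bar>L y' - L y\<bar> \<le> e / 2"
    if y: "y \<in> {a..b}" "y' \<in> {a..b}" "y \<le> y'" "y' - y < d" for y y'
  proof -
    have "L y \<le> L y'"
      unfolding L_def using y bdd by (intro cInf_superset_mono) auto
    moreover have "q y' - e / 2 \<le> q s" if "y \<le> s" "s < y'" for s
    proof -
      have "dist (q s) (q y') < e / 2"
        using d[of y' s] that y by (auto simp: dist_real_def)
      then show ?thesis
        unfolding dist_real_def by linarith
    qed
    then have "L y' - e / 2 \<le> L y"
      unfolding L_def using y bdd \<open>e > 0\<close> by (intro Inf_image_atLeastAtMost_ge) auto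
    ultimately show ?thesis by linarith
  qed
  show "\<exists>d>0. \<forall>y\<in>{a..b}. \<forall>y'\<in>{a..b}. dist y' y < d \<longrightarrow> dist (L y') (L y) < e"
  proof (intro exI[of _ d] conjI ballI impI)
    fix y y' assume "y \<in> {a..b}" "y' \<in> {a..b}" "dist y' y < d"
    then have "\<bar>L y' - L y\<bar> \<le> e / 2"
      using near[of y y'] near[of y' y] by (cases "y \<le> y'") (auto simp: dist_real_def abs_minus_commute)
    then show "dist (L y') (L y) < e"
      using \<open>e > 0\<close> by (simp add: dist_real_def)
  qed (rule \<open>d > 0\<close>)
qed

lemma strict_mono_on_mult_frac:
  fixes \<phi> :: "real \<Rightarrow> real"
  assumes mono: "mono_on {0<..} \<phi>" and pos: "\<And>r. r > 0 \<Longrightarrow> \<phi> r > 0"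
  shows "strict_mono_on {0..} (\<lambda>r. \<phi> r * (r / (1 + r)))"
proof (rule strict_mono_onI)
  fix r r' :: real assume r: "r \<in> {0..}" "r' \<in> {0..}" "r < r'"
  then have "0 < \<phi> r' * (r' / (1 + r'))"
    using pos[of r'] by simp
  moreover have "\<phi> r * (r / (1 + r)) < \<phi> r' * (r' / (1 + r'))" if "r > 0"
  proof -
    have "r / (1 + r) < r' / (1 + r')"
      using r that by (simp add: field_simps)
    then have "\<phi> r * (r / (1 + r)) < \<phi> r * (r' / (1 + r'))"
      using pos[OF that] by (rule mult_strict_left_mono)
    also have "\<dots> \<le> \<phi> r' * (r' / (1 + r'))"
      using mono_onD[OF mono, of r r'] r that by (intro mult_right_mono) auto
    finally show ?thesis .
  qed
  ultimately show "\<phi> r * (r / (1 + r)) < \<phi> r' * (r' / (1 + r'))"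
    using r by (cases "r = 0") auto
qed

lemma tendsto_mult_frac_at_0:
  fixes \<phi> :: "real \<Rightarrow> real"
  assumes mono: "mono_on {0<..} \<phi>" and pos: "\<And>r. r > 0 \<Longrightarrow> \<phi> r > 0"
  shows "((\<lambda>r. \<phi> r * (r / (1 + r))) \<longlongrightarrow> 0) (at 0 within {0..})"
proof (rule Lim_null_comparison)
  show "eventually (\<lambda>r. norm (\<phi> r * (r / (1 + r))) \<le> \<phi> 1 * r) (at 0 within {0..})"
    unfolding eventually_at
  proof (intro exI[of _ 1] conjI ballI impI)
    fix r :: real assume "r \<in> {0..}" "r \<noteq> 0 \<and> dist r 0 < 1"
    then have r: "0 < r" "r < 1" by auto
    have "\<phi> r * (r / (1 + r)) \<le> \<phi> 1 * (r / (1 + r))"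
      using mono_onD[OF mono, of r 1] r by (intro mult_right_mono) auto
    also have "\<dots> \<le> \<phi> 1 * r"
      using r pos[of 1] by (intro mult_left_mono) (auto simp: field_simps)
    finally show "norm (\<phi> r * (r / (1 + r))) \<le> \<phi> 1 * r"
      using pos[of r] r by simp
  qed simp
  show "((\<lambda>r. \<phi> 1 * r) \<longlongrightarrow> 0) (at 0 within {0..})"
    by (intro tendsto_eq_intros) auto
qed

lemma class_K_mult_frac:
  fixes \<phi> :: "real \<Rightarrow> real"
  assumes cont: "continuous_on {0<..} \<phi>" and mono: "mono_on {0<..} \<phi>"
    and pos: "\<And>r. r > 0 \<Longrightarrow> \<phi> r > 0"
  shows "class_K (\<lambda>r. \<phi> r * (r / (1 + r)))"
proof -
  define \<alpha> where "\<alpha> = (\<lambda>r. \<phi> r * (r / (1 + r)))"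
  have "continuous (at r within {0..}) \<alpha>" if "r \<ge> 0" for r
  proof (cases "r = 0")
    case True
    then show ?thesis
      using tendsto_mult_frac_at_0[OF mono pos] by (simp add: continuous_within \<alpha>_def)
  next
    case False
    have "continuous_on {0<..} \<alpha>"
      unfolding \<alpha>_def by (intro continuous_intros cont) auto
    then have "continuous (at r) \<alpha>"
      using False that by (intro continuous_on_interior[of "{0<..}"]) (auto simp: interior_open)
    then show ?thesis
      by (rule continuous_at_imp_continuous_within)
  qed
  then have "continuous_on {0..} \<alpha>"
    by (simp add: continuous_on_eq_continuous_within)
  moreover have "\<alpha> r \<ge> 0" if "r \<ge> 0" for r
    using pos[of r] that by (cases "r = 0") (auto simp: \<alpha>_def)
  ultimately show ?thesis
    using strict_mono_on_mult_frac[OF mono pos] unfolding class_K_def \<alpha>_def by auto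
qed

lemma class_K_pos:
  assumes "class_K \<alpha>" and "r > 0"
  shows "\<alpha> r > 0"
proof -
  from assms(1) have mono: "strict_mono_on {0..} \<alpha>"
    by (simp add: class_K_def)
  have "\<alpha> 0 < \<alpha> r"
    by (rule strict_mono_onD[OF mono]) (use assms(2) in auto)
  with assms(1) show ?thesis
    by (simp add: class_K_def)
qed

lemma Inf_image_atLeastAtMost_pos:
  fixes q :: "real \<Rightarrow> real"
  assumes "continuous_on {a..b} q" and "a \<le> b" and "\<And>s. s \<in> {a..b} \<Longrightarrow> 0 < q s"
  shows "0 < Inf (q ` {a..b})"
proof -
  obtain m where m: "m \<in> {a..b}" "\<And>s. s \<in> {a..b} \<Longrightarrow> q m \<le> q s"
    using continuous_attains_inf[OF compact_Icc _ assms(1)] assms(2) by auto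
  then have "q m \<le> Inf (q ` {a..b})"
    by (intro cInf_greatest) auto
  with assms(3)[OF m(1)] show ?thesis
    by simp
qed

lemma continuous_on_Inf_image_min_atLeastAtMost:
  fixes q :: "real \<Rightarrow> real"
  assumes "continuous_on {0<..b} q" and "0 < b"
  shows "continuous_on {0<..} (\<lambda>r. Inf (q ` {min r b / 2..b}))"
proof -
  have "continuous_on {a<..} (\<lambda>r. Inf (q ` {min r b / 2..b}))" if "a > 0" for a
  proof (rule continuous_on_compose2[of "{min a b / 2..b}" "\<lambda>y. Inf (q ` {y..b})"])
    show "continuous_on {min a b / 2..b} (\<lambda>y. Inf (q ` {y..b}))"
      using that \<open>0 < b\<close>
      by (intro continuous_on_Inf_image_atLeastAtMost continuous_on_subset[OF assms(1)]) auto
  qed (use \<open>0 < b\<close> in \<open>auto intro!: continuous_intros\<close>)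
  then have "continuous_on (\<Union>a\<in>{0<..}. {a<..}) (\<lambda>r. Inf (q ` {min r b / 2..b}))"
    by (intro continuous_on_open_UN) auto
  moreover have "(\<Union>a\<in>{0<..}. {a<..}) = {0::real<..}"
  proof (intro equalityI subsetI)
    fix x :: real assume "x \<in> {0<..}"
    then show "x \<in> (\<Union>a\<in>{0<..}. {a<..})" by (intro UN_I[of "x / 2"]) auto
  qed auto
  ultimately show ?thesis
    by simp
qed

lemma class_K_below_positive_continuous:
  fixes q :: "real \<Rightarrow> real"
  assumes q_cont: "continuous_on {0<..b} q" and q_pos: "\<And>s. 0 < s \<Longrightarrow> s \<le> b \<Longrightarrow> 0 < q s"
    and "0 < b"
  obtains \<alpha> where "class_K \<alpha>" and "\<And>r s. 0 < r \<Longrightarrow> min r b / 2 \<le> s \<Longrightarrow> s \<le> b \<Longrightarrow> \<alpha> r \<le> q s"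
proof -
  define \<phi> where "\<phi> r = Inf (q ` {min r b / 2..b})" for r
  have bdd: "bdd_below (q ` {y..b})" if "0 < y" for y
    using q_pos that by (intro bdd_belowI[of _ 0]) (auto intro: less_imp_le)
  have "continuous_on {0<..} \<phi>"
    unfolding \<phi>_def using q_cont \<open>0 < b\<close> by (rule continuous_on_Inf_image_min_atLeastAtMost)
  moreover have "mono_on {0<..} \<phi>"
    unfolding \<phi>_def using bdd \<open>0 < b\<close> by (intro mono_onI cInf_superset_mono) auto
  moreover have \<phi>_pos: "\<phi> r > 0" if "r > 0" for r
    unfolding \<phi>_def using that \<open>0 < b\<close> q_pos
    by (intro Inf_image_atLeastAtMost_pos continuous_on_subset[OF q_cont]) auto
  ultimately have "class_K (\<lambda>r. \<phi> r * (r / (1 + r)))"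
    by (intro class_K_mult_frac) auto
  moreover have "\<phi> r * (r / (1 + r)) \<le> q s" if "0 < r" "min r b / 2 \<le> s" "s \<le> b" for r s
  proof -
    have "\<phi> r * (r / (1 + r)) \<le> \<phi> r"
      using \<phi>_pos[OF \<open>0 < r\<close>] \<open>0 < r\<close> by (intro mult_left_le) auto
    also have "\<phi> r \<le> q s"
      unfolding \<phi>_def using that \<open>0 < b\<close> bdd by (intro cInf_lower) auto
    finally show ?thesis .
  qed
  ultimately show thesis
    using that by blast
qed

lemma class_K_speed_margin:
  fixes \<sigma> :: "real \<Rightarrow> real" and \<epsilon> :: real
  assumes \<sigma>_cont: "continuous_on {0<..} \<sigma>" and \<sigma>_nonneg: "\<forall>s>0. \<sigma> s \<ge> 0" and "\<epsilon> > 0"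
  obtains \<alpha> where "class_K \<alpha>" and "\<And>r. r > 0 \<Longrightarrow> \<alpha> r \<le> min r \<epsilon> / 2"
    and "\<And>r s. r > 0 \<Longrightarrow> min r \<epsilon> / 2 \<le> s \<Longrightarrow> s \<le> min r \<epsilon> \<Longrightarrow> \<alpha> r * \<sigma> s \<le> min r \<epsilon> / 4"
proof -
  define q where "q s = s / (4 * (1 + \<sigma> s))" for s
  have q_pos: "q s > 0" and q_le: "q s \<le> s / 4" and q_\<sigma>: "q s * \<sigma> s \<le> s / 4" if "s > 0" for s
    using \<sigma>_nonneg that by (auto simp: q_def field_simps)
  have "4 * (1 + \<sigma> s) \<noteq> 0" if "s \<in> {0<..\<epsilon>}" for s
    using \<sigma>_nonneg that by (smt (verit) greaterThanAtMost_iff)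
  then have "continuous_on {0<..\<epsilon>} q"
    unfolding q_def by (intro continuous_intros continuous_on_subset[OF \<sigma>_cont]) auto
  then obtain \<alpha> where K: "class_K \<alpha>" and \<alpha>_le: "\<And>r s. 0 < r \<Longrightarrow> min r \<epsilon> / 2 \<le> s \<Longrightarrow> s \<le> \<epsilon> \<Longrightarrow> \<alpha> r \<le> q s"
    using class_K_below_positive_continuous[of \<epsilon> q] q_pos \<open>\<epsilon> > 0\<close> by blast
  have \<rho>_pos: "0 < min r \<epsilon>" if "r > 0" for r
    using that \<open>\<epsilon> > 0\<close> by simp
  show thesis
  proof (rule that[OF K])
    show "\<alpha> r \<le> min r \<epsilon> / 2" if "r > 0" for r
      using \<alpha>_le[of r "min r \<epsilon> / 2"] q_le[of "min r \<epsilon> / 2"] \<rho>_pos[OF that] that by linarith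
    show "\<alpha> r * \<sigma> s \<le> min r \<epsilon> / 4" if "r > 0" "min r \<epsilon> / 2 \<le> s" "s \<le> min r \<epsilon>" for r s
    proof -
      have "0 < s"
        using \<rho>_pos[of r] that by linarith
      then have "\<alpha> r * \<sigma> s \<le> q s * \<sigma> s"
        using \<alpha>_le[of r s] \<sigma>_nonneg that by (intro mult_right_mono) auto
      also have "\<dots> \<le> min r \<epsilon> / 4"
        using q_\<sigma>[OF \<open>0 < s\<close>] that by linarith
      finally show ?thesis .
    qed
  qed
qed

lemma htd_slice_0_interval:
  assumes "htd E" and "(t, 0) \<in> E"
  shows "{0..t} \<subseteq> slice E 0"
proof -
  obtain Es :: "nat \<Rightarrow> (real \<times> nat) set" where Es: "\<And>k. compact_htd (Es k)" and E: "E = (\<Union>k. Es k)"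
    using assms(1) unfolding htd_def by blast
  then obtain k where "(t, 0) \<in> Es k"
    using assms(2) by auto
  moreover obtain J \<tau> where "\<tau> 0 = 0" and Es_k: "Es k = (\<Union>j\<in>{0..J}. {\<tau> j..\<tau> (Suc j)} \<times> {j})"
    using Es[of k] unfolding compact_htd_def by blast
  ultimately have "t \<le> \<tau> (Suc 0)"
    by auto
  with \<open>\<tau> 0 = 0\<close> have "{0..t} \<times> {0} \<subseteq> {\<tau> 0..\<tau> (Suc 0)} \<times> {0}"
    by auto
  also have "\<dots> \<subseteq> Es k"
    unfolding Es_k by (rule UN_upper) simp
  finally have "{0..t} \<times> {0} \<subseteq> Es k" .
  then show ?thesis
    unfolding E slice_def by blast
qed

lemma solution_pair_first_flow:
  assumes "solution_pair C f D g E x u" and "(t, 0) \<in> E" and "0 < t"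
  obtains N where "N \<in> null_sets lebesgue" and "abs_cont_on {0..t} (\<lambda>s. x s 0)"
    and "\<And>s. s \<in> {0..t} \<Longrightarrow> s \<notin> N \<Longrightarrow> (x s 0, u s 0) \<in> C \<and>
           ((\<lambda>s. x s 0) has_vector_derivative f (x s 0) (u s 0)) (at s within {0..t})"
proof -
  have sub: "{0..t} \<subseteq> slice E 0"
    using assms(1,2) by (intro htd_slice_0_interval) (auto simp: solution_pair_def)
  have "t / 2 \<in> interior (slice E 0)"
    using interior_mono[OF sub] assms(3) by auto
  then have flow: "loc_abs_cont_on (slice E 0) (\<lambda>s. x s 0)"
    "AE s in lebesgue. s \<in> slice E 0 \<longrightarrow> (x s 0, u s 0) \<in> C \<and>
       ((\<lambda>s. x s 0) has_vector_derivative f (x s 0) (u s 0)) (at s within slice E 0)"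
    using assms(1) unfolding solution_pair_def by blast+
  obtain N where N: "\<And>s. s \<in> space lebesgue - N \<Longrightarrow> s \<in> slice E 0 \<longrightarrow>
       (x s 0, u s 0) \<in> C \<and> ((\<lambda>s. x s 0) has_vector_derivative f (x s 0) (u s 0)) (at s within slice E 0)"
    and "N \<in> null_sets lebesgue"
    using AE_E3[OF flow(2)] by blast
  show thesis
  proof (rule that[OF \<open>N \<in> null_sets lebesgue\<close>])
    show "abs_cont_on {0..t} (\<lambda>s. x s 0)"
      using flow(1) sub unfolding loc_abs_cont_on_def by blast
    show "(x s 0, u s 0) \<in> C \<and> ((\<lambda>s. x s 0) has_vector_derivative f (x s 0) (u s 0)) (at s within {0..t})"
      if "s \<in> {0..t}" "s \<notin> N" for s
    proof -
      have "(x s 0, u s 0) \<in> C"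
        and "((\<lambda>s. x s 0) has_vector_derivative f (x s 0) (u s 0)) (at s within slice E 0)"
        using N[of s] that sub by auto
      then show ?thesis
        using has_vector_derivative_within_subset[OF _ sub] by blast
    qed
  qed
qed

lemma solution_pair_infdist_ge:
  assumes "class_K \<alpha>" and \<alpha>_le: "\<And>r. r > 0 \<Longrightarrow> \<alpha> r \<le> min r \<epsilon> / 2"
    and \<alpha>_\<sigma>: "\<And>r s. r > 0 \<Longrightarrow> min r \<epsilon> / 2 \<le> s \<Longrightarrow> s \<le> min r \<epsilon> \<Longrightarrow> \<alpha> r * \<sigma> s \<le> min r \<epsilon> / 4"
    and f_bound: "\<forall>x u. (x, u) \<in> C \<and> 0 < infdist x A \<and> infdist x A \<le> \<epsilon> \<longrightarrow> norm (f x u) \<le> \<sigma> (infdist x A)"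
    and "0 < \<epsilon>" and sol: "solution_pair C f D g E x u" and "(t, 0) \<in> E"
    and r: "0 < infdist (x 0 0) A" and t: "0 < t" "t \<le> \<alpha> (infdist (x 0 0) A)"
  shows "\<alpha> (infdist (x 0 0) A) \<le> infdist (x t 0) A"
proof -
  define r where "r = infdist (x 0 0) A"
  define \<rho> where "\<rho> = min r \<epsilon>"
  define c where "c = \<rho> / (4 * \<alpha> r)"
  obtain N where "N \<in> null_sets lebesgue" and flow: "abs_cont_on {0..t} (\<lambda>s. x s 0)"
    "\<And>s. s \<in> {0..t} \<Longrightarrow> s \<notin> N \<Longrightarrow> (x s 0, u s 0) \<in> C \<and>
       ((\<lambda>s. x s 0) has_vector_derivative f (x s 0) (u s 0)) (at s within {0..t})"
    using solution_pair_first_flow[OF sol \<open>(t, 0) \<in> E\<close> \<open>0 < t\<close>] by blast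
  have "\<alpha> r > 0" and "\<rho> > 0"
    using class_K_pos[OF assms(1)] r \<open>0 < \<epsilon>\<close> by (simp_all add: r_def \<rho>_def)
  have "\<alpha> r \<le> \<rho> / 2"
    using \<alpha>_le[of r] r by (simp add: r_def \<rho>_def)
  also have "\<rho> / 2 \<le> infdist (x t 0) A"
  proof (rule infdist_ge_half_if_slow_in_band[OF _ flow(1) \<open>N \<in> null_sets lebesgue\<close>])
    show "0 \<le> t" "\<rho> \<le> infdist (x 0 0) A" "0 \<le> c"
      using t \<open>\<alpha> r > 0\<close> \<open>\<rho> > 0\<close> by (auto simp: \<rho>_def r_def c_def)
    have "c * t \<le> c * \<alpha> r"
      using t \<open>0 \<le> c\<close> unfolding r_def by (intro mult_left_mono) auto
    then show "c * (t - 0) < \<rho> / 2"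
      using \<open>\<alpha> r > 0\<close> \<open>\<alpha> r \<le> \<rho> / 2\<close> by (simp add: c_def)
    fix s assume s: "s \<in> {0..t}" "s \<notin> N" "\<rho> / 2 < infdist (x s 0) A" "infdist (x s 0) A < \<rho>"
    have "norm (f (x s 0) (u s 0)) \<le> \<sigma> (infdist (x s 0) A)"
      using f_bound flow(2)[OF s(1,2)] s(3,4) \<open>\<alpha> r > 0\<close> \<open>\<alpha> r \<le> \<rho> / 2\<close> unfolding \<rho>_def by auto
    also have "\<dots> \<le> c"
      using \<alpha>_\<sigma>[of r "infdist (x s 0) A"] r s(3,4) \<open>\<alpha> r > 0\<close>
      unfolding c_def \<rho>_def r_def by (simp add: field_simps)
    finally show "\<exists>v. ((\<lambda>s. x s 0) has_vector_derivative v) (at s within {0..t}) \<and> norm v \<le> c"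
      using flow(2)[OF s(1,2)] by blast
  qed
  finally show ?thesis
    by (simp add: r_def)
qed

theorem lemma4:
  fixes C D :: "((real^('n::finite)) \<times> (real^('m::finite))) set"
    and f g :: "(real^('n::finite)) \<Rightarrow> (real^'m) \<Rightarrow> (real^'n)"
    and A :: "((real^('n::finite))) set"
    and \<sigma> :: "real \<Rightarrow> real" and \<epsilon> :: real
  assumes "closed C" and "closed A"
    and "continuous_on {0<..} \<sigma>" and "\<forall>s>0. \<sigma> s \<ge> 0"
    and "\<epsilon> > 0"
    and "\<forall>x u. (x, u) \<in> C \<and> 0 < setdist_pt x A \<and> setdist_pt x A \<le> \<epsilon>
            \<longrightarrow> norm (f x u) \<le> \<sigma> (setdist_pt x A)"
  shows "\<exists>\<alpha>. class_K \<alpha> \<and>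
    (\<forall>E (x :: real \<Rightarrow> nat \<Rightarrow> (real^('n::finite))) (u :: real \<Rightarrow> nat \<Rightarrow> (real^('m::finite))).
       solution_pair C f D g E x u \<longrightarrow>
       (\<forall>t. t \<in> {0 .. \<alpha> (setdist_pt (x 0 0) A)} \<and> (t, 0) \<in> E \<longrightarrow>
            setdist_pt (x t 0) A \<ge> \<alpha> (setdist_pt (x 0 0) A)))"
proof -
  obtain \<alpha> where K: "class_K \<alpha>" and \<alpha>_le: "\<And>r. r > 0 \<Longrightarrow> \<alpha> r \<le> min r \<epsilon> / 2"
    and \<alpha>_\<sigma>: "\<And>r s. r > 0 \<Longrightarrow> min r \<epsilon> / 2 \<le> s \<Longrightarrow> s \<le> min r \<epsilon> \<Longrightarrow> \<alpha> r * \<sigma> s \<le> min r \<epsilon> / 4"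
    using class_K_speed_margin[OF assms(3-5)] by blast
  have "\<alpha> (infdist (x 0 0) A) \<le> infdist (x t 0) A"
    if sol: "solution_pair C f D g E x u" and t: "0 \<le> t" "t \<le> \<alpha> (infdist (x 0 0) A)" "(t, 0) \<in> E"
    for E x u t
  proof (cases "0 < infdist (x 0 0) A \<and> 0 < t")
    case True
    with assms(5,6) t(2) show ?thesis
      by (intro solution_pair_infdist_ge[OF K \<alpha>_le \<alpha>_\<sigma> _ _ sol t(3)]) (auto simp: setdist_pt_def)
  next
    case False
    with t infdist_nonneg[of "x 0 0" A] consider "infdist (x 0 0) A = 0" | "t = 0" "0 < infdist (x 0 0) A"
      by fastforce
    then show ?thesis
      using K \<alpha>_le[of "infdist (x 0 0) A"] infdist_nonneg[of "x t 0" A] by cases (auto simp: class_K_def)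
  qed
  with K show ?thesis
    unfolding setdist_pt_def by auto
qed

end
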